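(* (a) For the star graph $S_n$ on $n\ge 2$ vertices (one center adjacent to $n-1$ leaves), $\gamma(S_n)=\dfrac{n}{2n-3}$. (b) For the complete bipartite graph $K_{m,n}$ with part sizes $m\ge n\ge 1$, $\gamma(K_{m,n})=\dfrac{m+n}{2m+n-2}$.
   Context: For a finite simple undirected graph $G$ with $N$ vertices, let $\mathcal{F}=\{x\in\mathbb{R}^{V(G)} : \sum_{v} x_v = 0,\ \|x\|_\infty = 1\}$, for $x\in\mathcal{F}$ let $\gamma_x(G)=\max_{uv\in E(G)}|x_u-x_v|$, and $\gamma(G)=\min_{x\in\mathcal{F}}\gamma_x(G)$. *)

theory Defs
  imports Complex_Main
begin

text \<open>A finite simple undirected graph is given by a finite vertex set V and a
symmetric irreflexive adjacency relation E on V.  Vectors in R^V are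
functions 'a => real (values outside V are irrelevant).\<close>

definition simple_graph :: "'a set \<Rightarrow> ('a \<Rightarrow> 'a \<Rightarrow> bool) \<Rightarrow> bool" where
  "simple_graph V E \<longleftrightarrow> finite V \<and> (\<forall>u v. E u v \<longrightarrow> u \<in> V \<and> v \<in> V)
     \<and> (\<forall>u v. E u v \<longrightarrow> E v u) \<and> (\<forall>v. \<not> E v v)"

definition sup_norm_on :: "'a set \<Rightarrow> ('a \<Rightarrow> real) \<Rightarrow> real" where
  "sup_norm_on V x = Max ((\<lambda>v. \<bar>x v\<bar>) ` V)"

definition feasible :: "'a set \<Rightarrow> ('a \<Rightarrow> real) set" where
  "feasible V = {x. (\<Sum>v\<in>V. x v) = 0 \<and> sup_norm_on V x = 1}"

definition gamma_x :: "'a set \<Rightarrow> ('a \<Rightarrow> 'a \<Rightarrow> bool) \<Rightarrow> ('a \<Rightarrow> real) \<Rightarrow> real" where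
  "gamma_x V E x = Max {\<bar>x u - x v\<bar> | u v. u \<in> V \<and> v \<in> V \<and> E u v}"

text \<open>gamma(G) = min over feasible x of gamma_x(G); rendered as the infimum
(the paper asserts the minimum is attained).\<close>
definition gamma :: "'a set \<Rightarrow> ('a \<Rightarrow> 'a \<Rightarrow> bool) \<Rightarrow> real" where
  "gamma V E = Inf (gamma_x V E ` feasible V)"

definition star_V :: "nat \<Rightarrow> nat set" where "star_V n = {0..<n}"
definition star_E :: "nat \<Rightarrow> nat \<Rightarrow> nat \<Rightarrow> bool" where
  "star_E n u v \<longleftrightarrow> u < n \<and> v < n \<and> ((u = 0 \<and> v \<noteq> 0) \<or> (v = 0 \<and> u \<noteq> 0))"

definition kbip_V :: "nat \<Rightarrow> nat \<Rightarrow> nat set" where "kbip_V m n = {0..<m+n}"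
definition kbip_E :: "nat \<Rightarrow> nat \<Rightarrow> nat \<Rightarrow> nat \<Rightarrow> bool" where
  "kbip_E m n u v \<longleftrightarrow> u < m + n \<and> v < m + n \<and> ((u < m \<and> m \<le> v) \<or> (v < m \<and> m \<le> u))"

end

theory Submission
  imports Defs
begin

text \<open>Let the part A be at least as large as B.  Negating x if necessary, some vertex w has
x w = 1.  If w \<in> A, every vertex of B has value at least 1 - \<gamma> and every other vertex of A
at least 1 - 2\<gamma>, so 0 = \<Sum>x \<ge> 1 + (|A| - 1)(1 - 2\<gamma>) + |B|(1 - \<gamma>), i.e.
\<gamma> \<ge> (|A| + |B|) / (2|A| + |B| - 2); if w \<in> B the same argument gives a bound that is
at least as strong.  Equality is attained by the vector that is 1 at one vertex of A,
1 - 2\<gamma> on the rest of A and 1 - \<gamma> on B.  The star S_n is K_{n-1,1}.\<close>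

lemma finite_edge_diffs:
  assumes "finite V"
  shows "finite {\<bar>x u - x v\<bar> | u v. u \<in> V \<and> v \<in> V \<and> E u v}"
proof -
  have "{\<bar>x u - x v\<bar> | u v. u \<in> V \<and> v \<in> V \<and> E u v} \<subseteq> (\<lambda>(u, v). \<bar>x u - x v\<bar>) ` (V \<times> V)"
    by auto
  then show ?thesis
    using assms finite_subset by blast
qed

lemma edge_diff_le_gamma_x:
  assumes "finite V" "u \<in> V" "v \<in> V" "E u v"
  shows "\<bar>x u - x v\<bar> \<le> gamma_x V E x"
  unfolding gamma_x_def by (rule Max_ge[OF finite_edge_diffs]) (use assms in blast)+

lemma gamma_x_eqI:
  assumes "finite V" "u\<^sub>0 \<in> V" "v\<^sub>0 \<in> V" "E u\<^sub>0 v\<^sub>0" "\<bar>x u\<^sub>0 - x v\<^sub>0\<bar> = g"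
    and "\<And>u v. u \<in> V \<Longrightarrow> v \<in> V \<Longrightarrow> E u v \<Longrightarrow> \<bar>x u - x v\<bar> \<le> g"
  shows "gamma_x V E x = g"
  unfolding gamma_x_def
  by (rule Max_eqI[OF finite_edge_diffs[OF assms(1)]]) (use assms in blast)+

lemma gamma_x_uminus: "gamma_x V E (\<lambda>v. - x v) = gamma_x V E x"
  unfolding gamma_x_def by (simp add: abs_minus_commute)

lemma feasible_attains_unit:
  assumes "finite V" "V \<noteq> {}" "x \<in> feasible V"
  obtains w where "w \<in> V" "\<bar>x w\<bar> = 1"
proof -
  have "Max ((\<lambda>v. \<bar>x v\<bar>) ` V) \<in> (\<lambda>v. \<bar>x v\<bar>) ` V"
    using assms(1,2) by (intro Max_in) auto
  then show ?thesis
    using assms(3) that unfolding feasible_def sup_norm_on_def by auto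
qed

lemma gamma_eqI:
  assumes "x \<in> feasible V" "gamma_x V E x = g"
    and "\<And>y. y \<in> feasible V \<Longrightarrow> g \<le> gamma_x V E y"
  shows "gamma V E = g"
  unfolding gamma_def by (rule cInf_eq_minimum) (use assms in auto)

lemma real_card_Diff_singleton:
  assumes "finite A" "a \<in> A"
  shows "real (card (A - {a})) = real (card A) - 1"
proof -
  have "0 < card A"
    using assms card_gt_0_iff by blast
  then show ?thesis
    using assms by (simp add: card_Diff_singleton of_nat_diff Suc_le_eq)
qed

lemma cross_gap_lower_bound:
  fixes y :: "'a \<Rightarrow> real"
  assumes "finite A" "finite B" "A \<inter> B = {}" "B \<noteq> {}" "w \<in> A" "y w = 1"
    and gap: "\<And>a b. a \<in> A \<Longrightarrow> b \<in> B \<Longrightarrow> \<bar>y a - y b\<bar> \<le> G"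
    and "sum y (A \<union> B) = 0"
  shows "real (card A) + real (card B) \<le> G * (2 * real (card A) + real (card B) - 2)"
proof -
  obtain b\<^sub>0 where b\<^sub>0: "b\<^sub>0 \<in> B"
    using \<open>B \<noteq> {}\<close> by auto
  have B_ge: "1 - G \<le> y b" if "b \<in> B" for b
    using gap[OF \<open>w \<in> A\<close> that] \<open>y w = 1\<close> by (simp add: abs_le_iff)
  have A_ge: "1 - 2 * G \<le> y a" if "a \<in> A" for a
    using gap[OF that b\<^sub>0] B_ge[OF b\<^sub>0] by (simp add: abs_le_iff)
  have "(real (card A) - 1) * (1 - 2 * G) \<le> sum y (A - {w})"
    using sum_bounded_below[of "A - {w}" "1 - 2 * G" y] A_ge real_card_Diff_singleton[OF assms(1,5)]
    by simp
  moreover have "real (card B) * (1 - G) \<le> sum y B"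
    using B_ge by (intro sum_bounded_below) auto
  moreover have "sum y (A \<union> B) = y w + sum y (A - {w}) + sum y B"
    using sum.union_disjoint[OF assms(1-3), of y] sum.remove[OF assms(1,5), of y] by simp
  ultimately have "1 + (real (card A) - 1) * (1 - 2 * G) + real (card B) * (1 - G) \<le> 0"
    using assms(6,8) by linarith
  then show ?thesis
    by (simp add: algebra_simps)
qed

lemma complete_bipartite_bound_at_peak:
  assumes "finite A" "finite B" "A \<inter> B = {}" "A \<noteq> {}" "B \<noteq> {}" "card B \<le> card A"
    and E: "\<And>u v. E u v \<longleftrightarrow> (u \<in> A \<and> v \<in> B) \<or> (u \<in> B \<and> v \<in> A)"
    and "w \<in> A \<union> B" "y w = 1" "sum y (A \<union> B) = 0"
  shows "real (card A + card B)
           \<le> gamma_x (A \<union> B) E y * (2 * real (card A) + real (card B) - 2)"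
proof -
  let ?G = "gamma_x (A \<union> B) E y"
  have gap: "\<bar>y a - y b\<bar> \<le> ?G" if "a \<in> A" "b \<in> B" for a b
    using that assms(1,2) E by (intro edge_diff_le_gamma_x) auto
  show ?thesis
  proof (cases "w \<in> A")
    case True
    show ?thesis
      using cross_gap_lower_bound[where y = y, OF assms(1-3,5) True \<open>y w = 1\<close> gap] assms(10)
      by simp
  next
    case False
    with \<open>w \<in> A \<union> B\<close> have "w \<in> B" by auto
    have gap': "\<bar>y b - y a\<bar> \<le> ?G" if "b \<in> B" "a \<in> A" for a b
      using gap[OF that(2,1)] by (simp add: abs_minus_commute)
    have "sum y (B \<union> A) = 0"
      using \<open>sum y (A \<union> B) = 0\<close> by (simp add: Un_commute)
    with assms(1-4) \<open>w \<in> B\<close> \<open>y w = 1\<close> gap'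
    have "real (card B) + real (card A) \<le> ?G * (2 * real (card B) + real (card A) - 2)"
      by (intro cross_gap_lower_bound[where y = y]) auto
    also have "\<dots> \<le> ?G * (2 * real (card A) + real (card B) - 2)"
    proof -
      obtain a b where "a \<in> A" "b \<in> B"
        using assms(4,5) by auto
      then have "0 \<le> ?G"
        using gap by (meson abs_ge_zero order_trans)
      then show ?thesis
        using \<open>card B \<le> card A\<close> by (intro mult_left_mono) auto
    qed
    finally show ?thesis by simp
  qed
qed

lemma complete_bipartite_lower_bound:
  assumes "finite A" "finite B" "A \<inter> B = {}" "A \<noteq> {}" "B \<noteq> {}" "card B \<le> card A"
    and E: "\<And>u v. E u v \<longleftrightarrow> (u \<in> A \<and> v \<in> B) \<or> (u \<in> B \<and> v \<in> A)"
    and "x \<in> feasible (A \<union> B)"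
  shows "real (card A + card B)
           \<le> gamma_x (A \<union> B) E x * (2 * real (card A) + real (card B) - 2)"
proof -
  have sum_x: "sum x (A \<union> B) = 0"
    using \<open>x \<in> feasible (A \<union> B)\<close> by (simp add: feasible_def)
  obtain w where w: "w \<in> A \<union> B" "\<bar>x w\<bar> = 1"
    using feasible_attains_unit assms(1,2,4,8) by (metis finite_Un sup_eq_bot_iff)
  show ?thesis
  proof (cases "x w = 1")
    case True
    then show ?thesis
      using complete_bipartite_bound_at_peak[OF assms(1-7) w(1)] sum_x by blast
  next
    case False
    with w have "- x w = 1" by auto
    then show ?thesis
      using complete_bipartite_bound_at_peak[OF assms(1-7) w(1), of "\<lambda>v. - x v"]
      by (simp add: gamma_x_uminus sum_negf sum_x)
  qed
qed

definition peak_vector :: "'a set \<Rightarrow> 'a \<Rightarrow> real \<Rightarrow> 'a \<Rightarrow> real" where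
  "peak_vector A a\<^sub>0 g v = (if v = a\<^sub>0 then 1 else if v \<in> A then 1 - 2 * g else 1 - g)"

lemma sum_peak_vector:
  assumes "finite A" "finite B" "A \<inter> B = {}" "a\<^sub>0 \<in> A"
  shows "sum (peak_vector A a\<^sub>0 g) (A \<union> B)
           = real (card A) + real (card B) - g * (2 * real (card A) + real (card B) - 2)"
proof -
  let ?p = "peak_vector A a\<^sub>0 g"
  have "sum ?p (A - {a\<^sub>0}) = sum (\<lambda>_. 1 - 2 * g) (A - {a\<^sub>0})"
    by (rule sum.cong) (auto simp: peak_vector_def)
  moreover have "sum ?p B = sum (\<lambda>_. 1 - g) B"
    by (rule sum.cong) (use assms(3,4) in \<open>auto simp: peak_vector_def\<close>)
  moreover have "sum ?p (A \<union> B) = ?p a\<^sub>0 + sum ?p (A - {a\<^sub>0}) + sum ?p B"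
    using sum.union_disjoint[OF assms(1-3), of ?p] sum.remove[OF assms(1,4), of ?p] by simp
  ultimately have
    "sum ?p (A \<union> B) = 1 + (real (card A) - 1) * (1 - 2 * g) + real (card B) * (1 - g)"
    using real_card_Diff_singleton[OF assms(1,4)] by (simp add: peak_vector_def)
  then show ?thesis
    by (simp add: algebra_simps)
qed

lemma sup_norm_peak_vector:
  assumes "finite A" "finite B" "a\<^sub>0 \<in> A" "0 \<le> g" "g \<le> 2" "A \<noteq> {a\<^sub>0} \<Longrightarrow> g \<le> 1"
  shows "sup_norm_on (A \<union> B) (peak_vector A a\<^sub>0 g) = 1"
  unfolding sup_norm_on_def
proof (rule Max_eqI)
  show "finite ((\<lambda>v. \<bar>peak_vector A a\<^sub>0 g v\<bar>) ` (A \<union> B))"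
    using assms(1,2) by simp
  show "1 \<in> (\<lambda>v. \<bar>peak_vector A a\<^sub>0 g v\<bar>) ` (A \<union> B)"
    using assms(3) by (force simp: peak_vector_def)
  fix z
  assume "z \<in> (\<lambda>v. \<bar>peak_vector A a\<^sub>0 g v\<bar>) ` (A \<union> B)"
  then obtain v where "z = \<bar>peak_vector A a\<^sub>0 g v\<bar>"
    by blast
  moreover have "A \<noteq> {a\<^sub>0}" if "v \<noteq> a\<^sub>0" "v \<in> A"
    using that by auto
  ultimately show "z \<le> 1"
    using assms(4-6) by (auto simp: peak_vector_def abs_le_iff)
qed

lemma gamma_x_peak_vector:
  assumes "finite A" "finite B" "A \<inter> B = {}" "a\<^sub>0 \<in> A" "B \<noteq> {}"
    and E: "\<And>u v. E u v \<longleftrightarrow> (u \<in> A \<and> v \<in> B) \<or> (u \<in> B \<and> v \<in> A)"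
  shows "gamma_x (A \<union> B) E (peak_vector A a\<^sub>0 g) = \<bar>g\<bar>"
proof -
  let ?p = "peak_vector A a\<^sub>0 g"
  have cross: "\<bar>?p a - ?p b\<bar> = \<bar>g\<bar>" if "a \<in> A" "b \<in> B" for a b
    using that assms(3,4) by (auto simp: peak_vector_def abs_minus_commute)
  obtain b\<^sub>0 where "b\<^sub>0 \<in> B"
    using assms(5) by auto
  show ?thesis
  proof (rule gamma_x_eqI)
    show "\<bar>?p a\<^sub>0 - ?p b\<^sub>0\<bar> = \<bar>g\<bar>"
      using cross assms(4) \<open>b\<^sub>0 \<in> B\<close> .
    show "\<bar>?p u - ?p v\<bar> \<le> \<bar>g\<bar>" if "E u v" for u v
      using that E cross by (metis abs_minus_commute order_refl)
  qed (use assms \<open>b\<^sub>0 \<in> B\<close> in auto)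
qed

lemma gamma_complete_bipartite:
  assumes "finite A" "finite B" "A \<inter> B = {}" "B \<noteq> {}" "card B \<le> card A"
    and E: "\<And>u v. E u v \<longleftrightarrow> (u \<in> A \<and> v \<in> B) \<or> (u \<in> B \<and> v \<in> A)"
  shows "gamma (A \<union> B) E = real (card A + card B) / (2 * real (card A) + real (card B) - 2)"
    (is "_ = ?g")
proof -
  let ?D = "2 * real (card A) + real (card B) - 2"
  have "card B \<ge> 1"
    using assms(2,4) by (simp add: Suc_le_eq card_gt_0_iff)
  then have "card A \<ge> 1" "?D > 0"
    using assms(5) by auto
  then obtain a\<^sub>0 where "a\<^sub>0 \<in> A"
    by fastforce
  then have "A \<noteq> {}"
    by auto
  have g_D: "?g * ?D = real (card A + card B)"
    using \<open>?D > 0\<close> by simp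
  have "0 \<le> ?g" "?g \<le> 2"
    using \<open>?D > 0\<close> \<open>card B \<ge> 1\<close> assms(5) by (simp_all add: pos_divide_le_eq)
  moreover have "?g \<le> 1" if "A \<noteq> {a\<^sub>0}"
  proof -
    have "A - {a\<^sub>0} \<noteq> {}"
      using that \<open>a\<^sub>0 \<in> A\<close> by blast
    then have "0 < card (A - {a\<^sub>0})"
      using assms(1) by (simp add: card_gt_0_iff)
    then have "card A \<ge> 2"
      using \<open>a\<^sub>0 \<in> A\<close> assms(1) by (simp add: card_Diff_singleton)
    then show ?thesis
      using \<open>?D > 0\<close> by (simp add: pos_divide_le_eq)
  qed
  ultimately have "peak_vector A a\<^sub>0 ?g \<in> feasible (A \<union> B)"
    using assms(1-3) \<open>a\<^sub>0 \<in> A\<close> g_D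
    by (simp add: feasible_def sum_peak_vector sup_norm_peak_vector)
  moreover have "gamma_x (A \<union> B) E (peak_vector A a\<^sub>0 ?g) = ?g"
    by (simp only: gamma_x_peak_vector[OF assms(1-3) \<open>a\<^sub>0 \<in> A\<close> assms(4) E]
        abs_of_nonneg[OF \<open>0 \<le> ?g\<close>])
  moreover have "?g \<le> gamma_x (A \<union> B) E x" if "x \<in> feasible (A \<union> B)" for x
    using complete_bipartite_lower_bound[OF assms(1-3) \<open>A \<noteq> {}\<close> assms(4,5) E that]
      \<open>?D > 0\<close> by (simp add: pos_divide_le_eq mult.commute)
  ultimately show ?thesis
    by (rule gamma_eqI)
qed

theorem corollary3p5:
  shows "(\<forall>n::nat. n \<ge> 2 \<longrightarrow>
           gamma (star_V n) (star_E n) = real n / (2 * real n - 3))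
       \<and> (\<forall>m n::nat. m \<ge> n \<and> n \<ge> 1 \<longrightarrow>
           gamma (kbip_V m n) (kbip_E m n) = real (m + n) / (2 * real m + real n - 2))"
proof (intro conjI allI impI)
  fix n :: nat
  assume "n \<ge> 2"
  then have "star_V n = {1..<n} \<union> {0}"
    by (auto simp: star_V_def)
  moreover have "gamma ({1..<n} \<union> {0}) (star_E n) = real (n - 1 + 1) / (2 * real (n - 1) + 1 - 2)"
    using \<open>n \<ge> 2\<close> by (subst gamma_complete_bipartite) (auto simp: star_E_def)
  ultimately show "gamma (star_V n) (star_E n) = real n / (2 * real n - 3)"
    using \<open>n \<ge> 2\<close> by (simp add: of_nat_diff algebra_simps)
next
  fix m n :: nat
  assume "m \<ge> n \<and> n \<ge> 1"
  have V: "kbip_V m n = {0..<m} \<union> {m..<m + n}"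
    by (auto simp: kbip_V_def)
  show "gamma (kbip_V m n) (kbip_E m n) = real (m + n) / (2 * real m + real n - 2)"
    unfolding V using \<open>m \<ge> n \<and> n \<ge> 1\<close>
    by (subst gamma_complete_bipartite) (auto simp: kbip_E_def)
qed

end
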